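(* Let $\langle L,\leq\rangle$ and $\langle K,\leq\rangle$ be complete lattices and $f:L\to K$ a surjective lattice morphism. Let $O:L\to L$ be an operator and $A:L^2\to L^2$ an approximator of $O$ such that both $O$ and $A$ respect $f$, and let $O_f$ and $A_f$ be their projections on $K$. If $(x,y)$ is the $A$-well-founded fixpoint of $O$, then $(f(x),f(y))$ is the $A_f$-well-founded fixpoint of $O_f$.
   Context: A lattice morphism $f:L\to K$ satisfies $f(\bigvee X)=\bigvee f(X)$ and $f(\bigwedge X)=\bigwedge f(X)$ for all $X\subseteq L$. $L^2$ carries the precision order $(x,y)\leq_p(u,v)$ iff $x\leq u$ and $v\leq y$; write $(x,y)_1=x,(x,y)_2=y$. An approximator of $O$ is a $\leq_p$-monotone $A:L^2\to L^2$ with $A(x,x)_1\leq O(x)\leq A(x,x)_2$ for all $x$, assumed symmetric ($A(x,y)_1=A(y,x)_2$). $O$ respects $f$ if $f(x)=f(y)$ implies $f(O(x))=f(O(y))$; then (for surjective $f$) $O_f$ is the unique operator on $K$ with $O_f\circ f=f\circ O$. With $f^2(x,y)=(f(x),f(y))$, $A$ respects $f$ if $f^2(p)=f^2(q)$ implies $f^2(A(p))=f^2(A(q))$; $A_f$ is the unique operator on $K^2$ with $A_f\circ f^2=f^2\circ A$. For an operator $B$ on a bilattice $M^2$ (and any operator $P$ on $M$), a partial $B$-stable fixpoint is a pair $(x,y)$ with $x=\mathrm{lfp}(B(\cdot,y)_1)$ and $y=\mathrm{lfp}(B(x,\cdot)_2)$; the $B$-well-founded fixpoint of $P$ is the $\leq_p$-least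 (least precise) partial $B$-stable fixpoint. *)

theory Defs
  imports Main
begin

definition lattice_morphism :: "('a::complete_lattice \<Rightarrow> 'b::complete_lattice) \<Rightarrow> bool" where
  "lattice_morphism f \<longleftrightarrow>
     (\<forall>X. f (Sup X) = Sup (f ` X)) \<and> (\<forall>X. f (Inf X) = Inf (f ` X))"

definition leq_p :: "('a::complete_lattice \<times> 'a) \<Rightarrow> ('a \<times> 'a) \<Rightarrow> bool" where
  "leq_p p q \<longleftrightarrow> fst p \<le> fst q \<and> snd q \<le> snd p"

definition approximator :: "('a::complete_lattice \<times> 'a \<Rightarrow> 'a \<times> 'a) \<Rightarrow> ('a \<Rightarrow> 'a) \<Rightarrow> bool" where
  "approximator A Op \<longleftrightarrow>
     (\<forall>p q. leq_p p q \<longrightarrow> leq_p (A p) (A q)) \<and>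
     (\<forall>x. fst (A (x, x)) \<le> Op x \<and> Op x \<le> snd (A (x, x)))"

definition symmetric_approx :: "('a \<times> 'a \<Rightarrow> 'a \<times> 'a) \<Rightarrow> bool" where
  "symmetric_approx A \<longleftrightarrow> (\<forall>x y. fst (A (x, y)) = snd (A (y, x)))"

definition op_respects :: "('a \<Rightarrow> 'a) \<Rightarrow> ('a \<Rightarrow> 'b) \<Rightarrow> bool" where
  "op_respects Op f \<longleftrightarrow> (\<forall>x y. f x = f y \<longrightarrow> f (Op x) = f (Op y))"

definition sq_map :: "('a \<Rightarrow> 'b) \<Rightarrow> 'a \<times> 'a \<Rightarrow> 'b \<times> 'b" where
  "sq_map f p = (f (fst p), f (snd p))"

definition approx_respects :: "('a \<times> 'a \<Rightarrow> 'a \<times> 'a) \<Rightarrow> ('a \<Rightarrow> 'b) \<Rightarrow> bool" where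
  "approx_respects A f \<longleftrightarrow> (\<forall>p q. sq_map f p = sq_map f q \<longrightarrow> sq_map f (A p) = sq_map f (A q))"

definition proj_op :: "('a \<Rightarrow> 'b) \<Rightarrow> ('a \<Rightarrow> 'a) \<Rightarrow> ('b \<Rightarrow> 'b)" where
  "proj_op f Op = (THE P. P \<circ> f = f \<circ> Op)"

definition proj_approx :: "('a \<Rightarrow> 'b) \<Rightarrow> ('a \<times> 'a \<Rightarrow> 'a \<times> 'a) \<Rightarrow> ('b \<times> 'b \<Rightarrow> 'b \<times> 'b)" where
  "proj_approx f A = (THE B. B \<circ> sq_map f = sq_map f \<circ> A)"

definition partial_stable_fp :: "('a::complete_lattice \<times> 'a \<Rightarrow> 'a \<times> 'a) \<Rightarrow> 'a \<times> 'a \<Rightarrow> bool" where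
  "partial_stable_fp B p \<longleftrightarrow>
     fst p = lfp (\<lambda>z. fst (B (z, snd p))) \<and> snd p = lfp (\<lambda>z. snd (B (fst p, z)))"

text \<open>The B-well-founded fixpoint (of any operator P; it does not depend on P):
  the leq_p-least partial B-stable fixpoint.\<close>
definition wf_fixpoint :: "('a::complete_lattice \<times> 'a \<Rightarrow> 'a \<times> 'a) \<Rightarrow> 'a \<times> 'a \<Rightarrow> bool" where
  "wf_fixpoint B p \<longleftrightarrow> partial_stable_fp B p \<and> (\<forall>q. partial_stable_fp B q \<longrightarrow> leq_p p q)"

end

theory Submission
  imports Defs
begin

text \<open>The stable operator of A is a precision-monotone operator on pairs whose fixpoints are
  the partial A-stable fixpoints, so the A-well-founded fixpoint lies below every prefixpoint of
  it. Because f is a surjective complete-lattice morphism, every pair (u, v) over K has a most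
  precise preimage (the largest element mapped below u, the least element mapped above v), and
  the pointwise map of f commutes with the stable operators, since f commutes with least
  fixpoints. Hence the most precise preimage of a partial stable fixpoint of the projected
  approximator is a prefixpoint of the stable operator of A; it lies above (x, y), and applying
  f gives the claim.\<close>

lemma lattice_morphism_mono:
  assumes "lattice_morphism f" and "a \<le> b"
  shows "f a \<le> f b"
proof -
  have "f (Sup {a, b}) = Sup (f ` {a, b})" using assms(1) unfolding lattice_morphism_def by blast
  then have "f b = sup (f a) (f b)" using \<open>a \<le> b\<close> by (simp add: sup_absorb2)
  then show ?thesis by (metis sup.cobounded1)
qed

lemma surj_lattice_morphism_Sup_sublevel:
  assumes "lattice_morphism f" and "surj f"
  shows "f (Sup {z. f z \<le> u}) = u"
proof (rule antisym)
  have "f (Sup {z. f z \<le> u}) = Sup (f ` {z. f z \<le> u})"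
    using assms(1) unfolding lattice_morphism_def by blast
  also have "\<dots> \<le> u" by (auto intro: Sup_least)
  finally show "f (Sup {z. f z \<le> u}) \<le> u" .
  obtain c where "u = f c" using \<open>surj f\<close> by (metis surjD)
  then show "u \<le> f (Sup {z. f z \<le> u})"
    using lattice_morphism_mono[OF assms(1)] by (simp add: Sup_upper)
qed

lemma surj_lattice_morphism_Inf_superlevel:
  assumes "lattice_morphism f" and "surj f"
  shows "f (Inf {z. v \<le> f z}) = v"
proof (rule antisym)
  have "f (Inf {z. v \<le> f z}) = Inf (f ` {z. v \<le> f z})"
    using assms(1) unfolding lattice_morphism_def by blast
  moreover have "v \<le> Inf (f ` {z. v \<le> f z})" by (auto intro: Inf_greatest)
  ultimately show "v \<le> f (Inf {z. v \<le> f z})" by simp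
  obtain c where "v = f c" using \<open>surj f\<close> by (metis surjD)
  then show "f (Inf {z. v \<le> f z}) \<le> v"
    using lattice_morphism_mono[OF assms(1)] by (simp add: Inf_lower)
qed

text \<open>No monotonicity of h is needed: surjectivity makes every k a value of f.\<close>
lemma surj_lattice_morphism_lfp_commute:
  assumes f: "lattice_morphism f" "surj f" and "mono g" and commute: "\<And>z. h (f z) = f (g z)"
  shows "f (lfp g) = lfp h"
proof (rule antisym)
  show "f (lfp g) \<le> lfp h"
  proof (rule lfp_greatest)
    fix k assume "h k \<le> k"
    define M where "M = Sup {z. f z \<le> k}"
    have fM: "f M = k" unfolding M_def by (rule surj_lattice_morphism_Sup_sublevel[OF f])
    then have "f (g M) \<le> k" using commute \<open>h k \<le> k\<close> by metis
    then have "lfp g \<le> M" unfolding M_def by (intro lfp_lowerbound Sup_upper) simp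
    then show "f (lfp g) \<le> k" using lattice_morphism_mono[OF f(1)] fM by metis
  qed
  show "lfp h \<le> f (lfp g)"
    using commute lfp_unfold[OF \<open>mono g\<close>] by (metis lfp_lowerbound order_refl)
qed

lemma the_factor_through_surj:
  assumes "surj g" and respects: "\<And>p q. g p = g q \<Longrightarrow> g (A p) = g (A q)"
  shows "(THE B. B \<circ> g = g \<circ> A) (g p) = g (A p)"
proof -
  define B0 where "B0 = g \<circ> A \<circ> inv g"
  have B0: "B0 \<circ> g = g \<circ> A"
  proof
    fix p
    have "g (inv g (g p)) = g p" by (rule surj_f_inv_f[OF \<open>surj g\<close>])
    from respects[OF this] show "(B0 \<circ> g) p = (g \<circ> A) p" unfolding B0_def by simp
  qed
  have "(THE B. B \<circ> g = g \<circ> A) = B0"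
  proof (rule the_equality[where P = "\<lambda>B. B \<circ> g = g \<circ> A", OF B0])
    fix B assume "B \<circ> g = g \<circ> A"
    with B0 show "B = B0" using surj_fun_eq[of g UNIV] \<open>surj g\<close> by (metis comp_apply)
  qed
  then show ?thesis using fun_cong[OF B0, of p] by simp
qed

lemma proj_approx_sq_map:
  assumes "surj f" and "approx_respects A f"
  shows "proj_approx f A (sq_map f p) = sq_map f (A p)"
proof -
  have "surj (sq_map f)"
  proof (rule surjI)
    fix q
    show "sq_map f (inv f (fst q), inv f (snd q)) = q"
      by (simp add: sq_map_def surj_f_inv_f[OF \<open>surj f\<close>])
  qed
  moreover have "\<And>p q. sq_map f p = sq_map f q \<Longrightarrow> sq_map f (A p) = sq_map f (A q)"
    using assms(2) unfolding approx_respects_def by blast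
  ultimately show ?thesis unfolding proj_approx_def by (rule the_factor_through_surj)
qed

lemma leq_p_sq_map:
  "lattice_morphism f \<Longrightarrow> leq_p p q \<Longrightarrow> leq_p (sq_map f p) (sq_map f q)"
  by (simp add: leq_p_def sq_map_def lattice_morphism_mono)

lemma leq_p_trans: "leq_p p q \<Longrightarrow> leq_p q r \<Longrightarrow> leq_p p r"
  unfolding leq_p_def by auto

lemma leq_p_antisym: "leq_p p q \<Longrightarrow> leq_p q p \<Longrightarrow> p = q"
  unfolding leq_p_def by (auto simp: prod_eq_iff)

definition most_precise_preimage ::
    "('a::complete_lattice \<Rightarrow> 'b::complete_lattice) \<Rightarrow> 'b \<times> 'b \<Rightarrow> 'a \<times> 'a" where
  "most_precise_preimage f q = (Sup {z. f z \<le> fst q}, Inf {z. snd q \<le> f z})"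

lemma sq_map_most_precise_preimage:
  "lattice_morphism f \<Longrightarrow> surj f \<Longrightarrow> sq_map f (most_precise_preimage f q) = q"
  by (simp add: sq_map_def most_precise_preimage_def surj_lattice_morphism_Sup_sublevel
      surj_lattice_morphism_Inf_superlevel)

lemma leq_p_most_precise_preimage:
  "sq_map f p = q \<Longrightarrow> leq_p p (most_precise_preimage f q)"
  by (auto simp: sq_map_def most_precise_preimage_def leq_p_def intro: Sup_upper Inf_lower)

definition prec_mono :: "('a::complete_lattice \<times> 'a \<Rightarrow> 'a \<times> 'a) \<Rightarrow> bool" where
  "prec_mono A \<longleftrightarrow> (\<forall>p q. leq_p p q \<longrightarrow> leq_p (A p) (A q))"

lemma approximator_prec_mono: "approximator A Op \<Longrightarrow> prec_mono A"
  unfolding approximator_def prec_mono_def by blast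

lemma prec_mono_fst_mono: "prec_mono A \<Longrightarrow> mono (\<lambda>z. fst (A (z, b)))"
  unfolding prec_mono_def by (rule monoI) (auto simp: leq_p_def)

lemma prec_mono_snd_mono: "prec_mono A \<Longrightarrow> mono (\<lambda>z. snd (A (a, z)))"
  unfolding prec_mono_def by (rule monoI) (auto simp: leq_p_def)

lemma prec_mono_least_prefixpoint:
  assumes "prec_mono S"
  obtains M where "S M = M" and "\<And>p. leq_p (S p) p \<Longrightarrow> leq_p M p"
proof -
  have S_mono: "leq_p (S p) (S q)" if "leq_p p q" for p q
    using assms that unfolding prec_mono_def by blast
  define P where "P = {p. leq_p (S p) p}"
  define M where "M = (Inf (fst ` P), Sup (snd ` P))"
  have below: "leq_p M p" if "p \<in> P" for p
    using that unfolding M_def leq_p_def by (auto intro: Inf_lower Sup_upper)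
  have SM_below: "fst (S M) \<le> fst p \<and> snd p \<le> snd (S M)" if "p \<in> P" for p
    using leq_p_trans[OF S_mono[OF below[OF that]]] that unfolding P_def leq_p_def by auto
  have "fst (S M) \<le> Inf (fst ` P)" using SM_below by (auto intro: Inf_greatest)
  moreover have "Sup (snd ` P) \<le> snd (S M)" using SM_below by (auto intro: Sup_least)
  ultimately have SM: "leq_p (S M) M" unfolding leq_p_def M_def by simp
  then have "leq_p M (S M)" using S_mono by (intro below) (simp add: P_def)
  with SM have "S M = M" by (rule leq_p_antisym)
  then show ?thesis using that below P_def by blast
qed

definition stable_op :: "('a::complete_lattice \<times> 'a \<Rightarrow> 'a \<times> 'a) \<Rightarrow> 'a \<times> 'a \<Rightarrow> 'a \<times> 'a" where
  "stable_op B p = (lfp (\<lambda>z. fst (B (z, snd p))), lfp (\<lambda>z. snd (B (fst p, z))))"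

lemma partial_stable_fp_iff_stable_op: "partial_stable_fp B p \<longleftrightarrow> stable_op B p = p"
  unfolding partial_stable_fp_def stable_op_def by (auto simp: prod_eq_iff)

lemma prec_mono_stable_op:
  assumes "prec_mono A"
  shows "prec_mono (stable_op A)"
  using assms unfolding prec_mono_def stable_op_def leq_p_def by (auto intro!: lfp_mono)

lemma wf_fixpoint_leq_p_prefixpoint:
  assumes "prec_mono A" and "wf_fixpoint A p" and "leq_p (stable_op A q) q"
  shows "leq_p p q"
proof -
  obtain M where "stable_op A M = M" and least: "\<And>q. leq_p (stable_op A q) q \<Longrightarrow> leq_p M q"
    using prec_mono_least_prefixpoint[OF prec_mono_stable_op[OF assms(1)]] by blast
  then have "leq_p p M"
    using assms(2) unfolding wf_fixpoint_def partial_stable_fp_iff_stable_op by blast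
  then show ?thesis using least[OF assms(3)] by (rule leq_p_trans)
qed

lemma sq_map_stable_op:
  assumes f: "lattice_morphism f" "surj f" and "prec_mono A"
    and commute: "\<And>a b. C (f a, f b) = sq_map f (A (a, b))"
  shows "sq_map f (stable_op A p) = stable_op C (sq_map f p)"
proof -
  have "f (lfp (\<lambda>z. fst (A (z, snd p)))) = lfp (\<lambda>z. fst (C (z, f (snd p))))"
    using commute prec_mono_fst_mono[OF \<open>prec_mono A\<close>]
    by (intro surj_lattice_morphism_lfp_commute[OF f]) (simp_all add: sq_map_def)
  moreover have "f (lfp (\<lambda>z. snd (A (fst p, z)))) = lfp (\<lambda>z. snd (C (f (fst p), z)))"
    using commute prec_mono_snd_mono[OF \<open>prec_mono A\<close>]
    by (intro surj_lattice_morphism_lfp_commute[OF f]) (simp_all add: sq_map_def)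
  ultimately show ?thesis unfolding stable_op_def sq_map_def by simp
qed

theorem theorem3p4:
  fixes f :: "'a::complete_lattice \<Rightarrow> 'b::complete_lattice"
    and Op :: "'a \<Rightarrow> 'a" and A :: "'a \<times> 'a \<Rightarrow> 'a \<times> 'a" and x y :: 'a
  assumes "lattice_morphism f" and "surj f"
    and "approximator A Op" and "symmetric_approx A"
    and "op_respects Op f" and "approx_respects A f"
    and "wf_fixpoint A (x, y)"
  shows "wf_fixpoint (proj_approx f A) (f x, f y)"
proof -
  have mono: "prec_mono A" using assms(3) by (rule approximator_prec_mono)
  have commute: "sq_map f (stable_op A p) = stable_op (proj_approx f A) (sq_map f p)" for p
  proof (rule sq_map_stable_op[OF assms(1,2) mono])
    show "proj_approx f A (f a, f b) = sq_map f (A (a, b))" for a b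
      using proj_approx_sq_map[OF assms(2,6), of "(a, b)"] by (simp add: sq_map_def)
  qed
  have "stable_op A (x, y) = (x, y)"
    using assms(7) unfolding wf_fixpoint_def partial_stable_fp_iff_stable_op by blast
  then have stable: "partial_stable_fp (proj_approx f A) (f x, f y)"
    using commute[of "(x, y)"] by (simp add: partial_stable_fp_iff_stable_op sq_map_def)
  have "leq_p (f x, f y) q" if "partial_stable_fp (proj_approx f A) q" for q
  proof -
    define c where "c = most_precise_preimage f q"
    have fc: "sq_map f c = q" unfolding c_def by (rule sq_map_most_precise_preimage[OF assms(1,2)])
    then have "sq_map f (stable_op A c) = q"
      using commute that by (simp add: partial_stable_fp_iff_stable_op)
    then have "leq_p (stable_op A c) c" unfolding c_def by (rule leq_p_most_precise_preimage)
    then have "leq_p (x, y) c" by (rule wf_fixpoint_leq_p_prefixpoint[OF mono assms(7)])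
    then show ?thesis using leq_p_sq_map[OF assms(1)] fc by (fastforce simp: sq_map_def)
  qed
  with stable show ?thesis unfolding wf_fixpoint_def by blast
qed

end
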